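(* Let $k\ge 1$, $H>0$, $\beta>0$, $h>0$, and consider a hierarchical-leadership flock $[0,1,\dots,k]$ with leader sets $\mathcal{L}(i)\subseteq\{0,\dots,i-1\}$, $\mathcal{L}(i)\neq\varnothing$ for $i\ge 1$. Let $\tilde x_0[n],\dots,\tilde x_k[n]\in\mathbb{R}^3$ ($n=0,1,2,\dots$) be positions, and for $j\in\mathcal{L}(i)$ set \[a_{ij}[n]=\frac{H}{\left(1+|\tilde x_j[n]-\tilde x_i[n]|^2/2\right)^{\beta}},\] and $a_{ij}[n]=0$ for $j\notin\mathcal{L}(i)$. Let $d_i[n]=\sum_{j\in\mathcal{L}(i)}a_{ij}[n]$ for $i\ge 1$, and let $L_n$ be the $k\times k$ matrix (indices $1,\dots,k$) with $(L_n)_{ii}=d_i[n]$, $(L_n)_{ij}=-a_{ij}[n]$ for $1\le j<i$, and $(L_n)_{ij}=0$ for $j>i$. Let $S[n]=I-hL_n$. Suppose that there is a constant $B\ge 0$ such that the reduced position vector $x[n]=(\tilde x_1[n]-\tilde x_0[n],\dots,\tilde x_k[n]-\tilde x_0[n])\in\mathbb{R}^{3k}$ satisfies $|x[n]|^2\le B$ for all $n\ge 0$, and set $d_\ast=H/(1+B)^{\beta}$. If $0<h<\frac{1}{2kH}$, then for all $n\ge 0$ every entry of $S[n]$ is nonnegative and \[\max_{i,j}S_{ij}[n]\le 1-hd_\ast=:\rho_h.\]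
   Context: A flock is under hierarchical leadership (HL) if its agents can be labeled $0,1,\dots,k$ so that agent $i$ is influenced by agent $j$ (i.e. $a_{ij}>0$) only if $j<i$, and every agent $i>0$ has a nonempty leader set $\mathcal{L}(i)=\{j: a_{ij}>0\}$. *)

theory Defs
  imports "HOL-Analysis.Analysis"
begin

definition hl_flock :: "nat \<Rightarrow> (nat \<Rightarrow> nat set) \<Rightarrow> bool" where
  "hl_flock k L \<longleftrightarrow> L 0 = {} \<and> (\<forall>i\<in>{1..k}. L i \<subseteq> {0..<i} \<and> L i \<noteq> {})"

text \<open>Positions: xt n i is the position of agent i at time n.\<close>
definition weight :: "real \<Rightarrow> real \<Rightarrow> (nat \<Rightarrow> nat set) \<Rightarrow> (nat \<Rightarrow> nat \<Rightarrow> real^3)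
    \<Rightarrow> nat \<Rightarrow> nat \<Rightarrow> nat \<Rightarrow> real" where
  "weight H \<beta> L xt n i j =
     (if j \<in> L i then H / (1 + (norm (xt n j - xt n i))\<^sup>2 / 2) powr \<beta> else 0)"

definition degree :: "real \<Rightarrow> real \<Rightarrow> (nat \<Rightarrow> nat set) \<Rightarrow> (nat \<Rightarrow> nat \<Rightarrow> real^3)
    \<Rightarrow> nat \<Rightarrow> nat \<Rightarrow> real" where
  "degree H \<beta> L xt n i = (\<Sum>j\<in>L i. weight H \<beta> L xt n i j)"

text \<open>The k x k matrix L_n, indices 1..k (entries outside this range are irrelevant).\<close>
definition lap :: "real \<Rightarrow> real \<Rightarrow> (nat \<Rightarrow> nat set) \<Rightarrow> (nat \<Rightarrow> nat \<Rightarrow> real^3)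
    \<Rightarrow> nat \<Rightarrow> nat \<Rightarrow> nat \<Rightarrow> real" where
  "lap H \<beta> L xt n i j =
     (if i = j then degree H \<beta> L xt n i
      else if j < i then - weight H \<beta> L xt n i j else 0)"

definition Smat :: "real \<Rightarrow> real \<Rightarrow> real \<Rightarrow> (nat \<Rightarrow> nat set) \<Rightarrow> (nat \<Rightarrow> nat \<Rightarrow> real^3)
    \<Rightarrow> nat \<Rightarrow> nat \<Rightarrow> nat \<Rightarrow> real" where
  "Smat h H \<beta> L xt n i j = (if i = j then 1 else 0) - h * lap H \<beta> L xt n i j"

text \<open>Squared Euclidean norm of the reduced vector x[n] in R^(3k).\<close>
definition reduced_sqnorm :: "nat \<Rightarrow> (nat \<Rightarrow> nat \<Rightarrow> real^3) \<Rightarrow> nat \<Rightarrow> real" where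
  "reduced_sqnorm k xt n = (\<Sum>i\<in>{1..k}. (norm (xt n i - xt n 0))\<^sup>2)"

end

theory Submission
  imports Defs
begin

text \<open>Every entry of S[n] is either 1 - h d_i[n], h a_ij[n] or 0. Each weight lies in [0, H],
  so h k H < 1/2 bounds the degrees and weights away from 1/h. Conversely, every agent has a leader,
  and the bound on the reduced vector keeps any two agents within squared distance 2B of each other,
  so d_i[n] is at least the weight H / (1 + B)^beta of a pair at that distance.\<close>

lemma weight_nonneg:
  assumes "H \<ge> 0" shows "weight H \<beta> L xt n i j \<ge> 0"
  using assms by (simp add: weight_def)

lemma weight_le:
  assumes "H \<ge> 0" "\<beta> \<ge> 0" shows "weight H \<beta> L xt n i j \<le> H"
proof -
  have "1 \<le> (1 + (norm (xt n j - xt n i))\<^sup>2 / 2) powr \<beta>"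
    using assms by (intro ge_one_powr_ge_zero) auto
  then have "H / (1 + (norm (xt n j - xt n i))\<^sup>2 / 2) powr \<beta> \<le> H"
    using assms(1) by (simp add: divide_le_eq mult_le_cancel_left1)
  then show ?thesis
    using assms(1) by (simp add: weight_def)
qed

lemma weight_ge:
  assumes "H \<ge> 0" "\<beta> \<ge> 0" "j \<in> L i" "(norm (xt n j - xt n i))\<^sup>2 / 2 \<le> D"
  shows "H / (1 + D) powr \<beta> \<le> weight H \<beta> L xt n i j"
proof -
  have "0 < 1 + (norm (xt n j - xt n i))\<^sup>2 / 2"
    by (simp add: add_pos_nonneg)
  then have "0 < (1 + (norm (xt n j - xt n i))\<^sup>2 / 2) powr \<beta>"
    by simp
  moreover have "(1 + (norm (xt n j - xt n i))\<^sup>2 / 2) powr \<beta> \<le> (1 + D) powr \<beta>"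
    using assms(2,4) by (intro powr_mono2) auto
  ultimately show ?thesis
    using assms(1,3) by (simp add: weight_def frac_le)
qed

lemma degree_le:
  assumes "H \<ge> 0" "\<beta> \<ge> 0" "L i \<subseteq> {0..<i}" "i \<le> k"
  shows "degree H \<beta> L xt n i \<le> real k * H"
proof -
  have "card (L i) \<le> k"
    using card_mono[OF _ assms(3)] assms(4) by simp
  have "degree H \<beta> L xt n i \<le> (\<Sum>j\<in>L i. H)"
    unfolding degree_def using assms(1,2) by (intro sum_mono weight_le)
  also have "\<dots> = real (card (L i)) * H" by simp
  also have "\<dots> \<le> real k * H"
    using \<open>card (L i) \<le> k\<close> assms(1) by (simp add: mult_right_mono)
  finally show ?thesis .
qed

lemma degree_ge_weight:
  assumes "H \<ge> 0" "finite (L i)" "j \<in> L i"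
  shows "weight H \<beta> L xt n i j \<le> degree H \<beta> L xt n i"
  unfolding degree_def using assms by (intro member_le_sum weight_nonneg) auto

lemma power2_norm_diff_le:
  fixes a b c :: "'a::real_normed_vector"
  shows "(norm (a - b))\<^sup>2 \<le> 2 * (norm (a - c))\<^sup>2 + 2 * (norm (b - c))\<^sup>2"
proof -
  have "(norm (a - b))\<^sup>2 \<le> (norm (a - c) + norm (b - c))\<^sup>2"
    using norm_triangle_ineq4[of "a - c" "b - c"] by (simp add: power_mono)
  also have "\<dots> \<le> 2 * (norm (a - c))\<^sup>2 + 2 * (norm (b - c))\<^sup>2"
    using sum_squares_bound[of "norm (a - c)" "norm (b - c)"]
    by (simp add: power2_eq_square algebra_simps)
  finally show ?thesis .
qed

lemma power2_norm_diff_le_reduced_sqnorm: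
  assumes "i \<le> k" "j \<le> k"
  shows "(norm (xt n j - xt n i))\<^sup>2 \<le> 2 * reduced_sqnorm k xt n"
proof -
  have member_le: "(norm (xt n m - xt n 0))\<^sup>2 \<le> reduced_sqnorm k xt n" if "m \<le> k" for m
    unfolding reduced_sqnorm_def using that
    by (cases "m = 0") (auto intro: member_le_sum sum_nonneg)
  consider "i = j" | "i = 0 \<or> j = 0" | "i \<noteq> j" "i \<in> {1..k}" "j \<in> {1..k}"
    using assms by fastforce
  then show ?thesis
  proof cases
    case 1
    then show ?thesis by (simp add: reduced_sqnorm_def sum_nonneg)
  next
    case 2
    then show ?thesis
      using member_le[OF assms(1)] member_le[OF assms(2)] member_le[of 0]
      by (auto simp: norm_minus_commute)
  next
    case 3
    have "(norm (xt n j - xt n 0))\<^sup>2 + (norm (xt n i - xt n 0))\<^sup>2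
        = (\<Sum>m\<in>{i, j}. (norm (xt n m - xt n 0))\<^sup>2)"
      using \<open>i \<noteq> j\<close> by simp
    also have "\<dots> \<le> reduced_sqnorm k xt n"
      unfolding reduced_sqnorm_def using 3 by (intro sum_mono2) auto
    finally show ?thesis
      using power2_norm_diff_le[of "xt n j" "xt n i" "xt n 0"] by linarith
  qed
qed

lemma degree_ge_of_reduced_sqnorm_le:
  assumes "H \<ge> 0" "\<beta> \<ge> 0" "hl_flock k L" "i \<in> {1..k}" "reduced_sqnorm k xt n \<le> B"
  shows "H / (1 + B) powr \<beta> \<le> degree H \<beta> L xt n i"
proof -
  have leaders: "L i \<subseteq> {0..<i}" "L i \<noteq> {}"
    using assms(3,4) by (auto simp: hl_flock_def)
  then obtain l where l: "l \<in> L i" by blast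
  have "l \<le> k" using l leaders(1) assms(4) by auto
  then have "(norm (xt n l - xt n i))\<^sup>2 / 2 \<le> B"
    using power2_norm_diff_le_reduced_sqnorm[of i k l xt n] assms(4,5) by simp
  then have "H / (1 + B) powr \<beta> \<le> weight H \<beta> L xt n i l"
    using weight_ge assms(1,2) l by blast
  also have "\<dots> \<le> degree H \<beta> L xt n i"
    using degree_ge_weight assms(1) l finite_subset[OF leaders(1)] by blast
  finally show ?thesis .
qed

lemma Smat_diag: "Smat h H \<beta> L xt n i i = 1 - h * degree H \<beta> L xt n i"
  by (simp add: Smat_def lap_def)

lemma Smat_off_diag:
  "i \<noteq> j \<Longrightarrow> Smat h H \<beta> L xt n i j = (if j < i then h * weight H \<beta> L xt n i j else 0)"
  by (simp add: Smat_def lap_def)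

theorem proposition2:
  fixes k :: nat and H \<beta> h B :: real
    and L :: "nat \<Rightarrow> nat set" and xt :: "nat \<Rightarrow> nat \<Rightarrow> real^3"
  assumes "k \<ge> 1" and "H > 0" and "\<beta> > 0" and "h > 0"
    and "hl_flock k L"
    and "B \<ge> 0" and "\<forall>n. reduced_sqnorm k xt n \<le> B"
    and "h < 1 / (2 * real k * H)"
  shows "\<forall>n. (\<forall>i\<in>{1..k}. \<forall>j\<in>{1..k}. Smat h H \<beta> L xt n i j \<ge> 0)
            \<and> (\<forall>i\<in>{1..k}. \<forall>j\<in>{1..k}.
                 Smat h H \<beta> L xt n i j \<le> 1 - h * (H / (1 + B) powr \<beta>))"
proof (intro allI conjI ballI)
  fix n i j assume i: "i \<in> {1..k}"
  define d where "d = H / (1 + B) powr \<beta>"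
  have "d \<le> degree H \<beta> L xt n i"
    using degree_ge_of_reduced_sqnorm_le assms(2,3,5,7) i unfolding d_def by simp
  then have "h * d \<le> h * degree H \<beta> L xt n i"
    using assms(4) by (simp add: mult_left_mono)
  moreover have "h * degree H \<beta> L xt n i \<le> h * (real k * H)"
    using degree_le[of H \<beta> L i k xt n] assms(2-5) i by (simp add: hl_flock_def mult_left_mono)
  moreover have "0 \<le> h * weight H \<beta> L xt n i j" "h * weight H \<beta> L xt n i j \<le> h * H"
    using weight_le[of H \<beta>] weight_nonneg[of H] assms(2-4) by (simp_all add: mult_left_mono)
  moreover have "h * real k * H < 1 / 2" "h * H \<le> h * real k * H"
    using assms(1,2,4,8) by (simp_all add: field_simps)
  moreover have "d \<le> H"
    using ge_one_powr_ge_zero[of "1 + B" \<beta>] assms(2,3,6) by (simp add: d_def divide_le_eq)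
  moreover have "Smat h H \<beta> L xt n i j \<in> {1 - h * degree H \<beta> L xt n i, h * weight H \<beta> L xt n i j, 0}"
    by (cases "i = j") (simp_all add: Smat_diag Smat_off_diag)
  ultimately have "0 \<le> Smat h H \<beta> L xt n i j \<and> Smat h H \<beta> L xt n i j \<le> 1 - h * d"
    by (elim insertE emptyE; linarith)
  then show "Smat h H \<beta> L xt n i j \<ge> 0" "Smat h H \<beta> L xt n i j \<le> 1 - h * d"
    by simp_all
qed

end
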